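(* Let $\mathcal{C}$ be a robust graph class (not necessarily hereditary) for which $\beta_{\mathcal{C}}$ is finite. For every integer $d\ge1$, $$\beta_{\mathcal{C}}(d)\ge\begin{cases}2^{d-1}+1 & \text{if } \beta_{\mathcal{C}}=1,\\ (\beta_{\mathcal{C}}-1)\,2^{d}+1 & \text{if } \beta_{\mathcal{C}}\ge 2.\end{cases}$$
   Context: $\mathrm{OPT}(G)$ is the minimum vertex cover size. $Y\subseteq V(G)$ is a blocking set of $G$ if no vertex cover of $G$ of size $\mathrm{OPT}(G)$ contains $Y$; minimal if no proper subset is a blocking set. $\beta(G)$ is the maximum size of a minimal blocking set of $G$; $\beta_{\mathcal{C}}=\sup_{G\in\mathcal{C}}\beta(G)$. Elimination distance: $\mathrm{ed}_{\mathcal{C}}(G)=0$ if $G\in\mathcal{C}$; otherwise if $G$ is connected, $\mathrm{ed}_{\mathcal{C}}(G)=1+\min_{v}\mathrm{ed}_{\mathcal{C}}(G-v)$; otherwise the maximum over connected components. $\beta_{\mathcal{C}}(d)=\max\{\beta(G):\mathrm{ed}_{\mathcal{C}}(G)\le d\}$. A class is robust if a graph is in it iff all its connected components are. *)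

theory Defs
  imports Main "HOL-Library.Extended_Nat"
begin

type_synonym graph = "nat set \<times> nat set set"

definition wf_graph :: "graph \<Rightarrow> bool" where
  "wf_graph G \<longleftrightarrow> finite (fst G) \<and>
     (\<forall>e\<in>snd G. \<exists>u v. e = {u, v} \<and> u \<noteq> v \<and> u \<in> fst G \<and> v \<in> fst G)"

definition vertex_cover :: "graph \<Rightarrow> nat set \<Rightarrow> bool" where
  "vertex_cover G S \<longleftrightarrow> S \<subseteq> fst G \<and> (\<forall>e\<in>snd G. e \<inter> S \<noteq> {})"

definition OPT :: "graph \<Rightarrow> nat" where
  "OPT G = (LEAST k. \<exists>S. vertex_cover G S \<and> card S = k)"

definition blocking_set :: "graph \<Rightarrow> nat set \<Rightarrow> bool" where
  "blocking_set G Y \<longleftrightarrow> Y \<subseteq> fst G \<and>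
     \<not> (\<exists>S. vertex_cover G S \<and> card S = OPT G \<and> Y \<subseteq> S)"

definition minimal_blocking_set :: "graph \<Rightarrow> nat set \<Rightarrow> bool" where
  "minimal_blocking_set G Y \<longleftrightarrow> blocking_set G Y \<and> (\<forall>Z. Z \<subset> Y \<longrightarrow> \<not> blocking_set G Z)"

text \<open>Maximum size of a minimal blocking set (0 if there is none, i.e. for the empty graph).\<close>
definition beta :: "graph \<Rightarrow> nat" where
  "beta G = Sup {card Y | Y. minimal_blocking_set G Y}"

definition betaC :: "graph set \<Rightarrow> enat" where
  "betaC C = Sup {enat (beta G) | G. wf_graph G \<and> G \<in> C}"

definition edge_rel :: "graph \<Rightarrow> (nat \<times> nat) set" where
  "edge_rel G = {(u, v). {u, v} \<in> snd G}"

definition connected_graph :: "graph \<Rightarrow> bool" where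
  "connected_graph G \<longleftrightarrow> (\<forall>u\<in>fst G. \<forall>v\<in>fst G. (u, v) \<in> (edge_rel G)\<^sup>*)"

definition induced :: "graph \<Rightarrow> nat set \<Rightarrow> graph" where
  "induced G W = (W, {e\<in>snd G. e \<subseteq> W})"

definition components :: "graph \<Rightarrow> graph set" where
  "components G = {induced G {v\<in>fst G. (u, v) \<in> (edge_rel G)\<^sup>*} | u. u \<in> fst G}"

definition delete_vertex :: "graph \<Rightarrow> nat \<Rightarrow> graph" where
  "delete_vertex G v = induced G (fst G - {v})"

definition isomorphic :: "graph \<Rightarrow> graph \<Rightarrow> bool" where
  "isomorphic G H \<longleftrightarrow> (\<exists>f. bij_betw f (fst G) (fst H) \<and> snd H = (\<lambda>e. f ` e) ` snd G)"

definition graph_class :: "graph set \<Rightarrow> bool" where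
  "graph_class C \<longleftrightarrow> (\<forall>G H. wf_graph G \<and> isomorphic G H \<longrightarrow> (G \<in> C \<longleftrightarrow> H \<in> C))"

definition robust :: "graph set \<Rightarrow> bool" where
  "robust C \<longleftrightarrow> (\<forall>G. wf_graph G \<longrightarrow> (G \<in> C \<longleftrightarrow> (\<forall>H\<in>components G. H \<in> C)))"

text \<open>ed_le C G k: the recursive definition of elimination distance, read as "ed_C(G) \<le> k".\<close>
inductive ed_le :: "graph set \<Rightarrow> graph \<Rightarrow> nat \<Rightarrow> bool" for C where
  in_class: "G \<in> C \<Longrightarrow> ed_le C G k"
| conn: "G \<notin> C \<Longrightarrow> connected_graph G \<Longrightarrow> v \<in> fst G \<Longrightarrow> ed_le C (delete_vertex G v) k
          \<Longrightarrow> ed_le C G (Suc k)"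
| disc: "G \<notin> C \<Longrightarrow> \<not> connected_graph G \<Longrightarrow> (\<forall>H\<in>components G. ed_le C H k) \<Longrightarrow> ed_le C G k"

definition ed :: "graph set \<Rightarrow> graph \<Rightarrow> enat" where
  "ed C G = Inf (enat ` {k. ed_le C G k})"

definition betaCd :: "graph set \<Rightarrow> nat \<Rightarrow> enat" where
  "betaCd C d = Sup {enat (beta G) | G. wf_graph G \<and> ed C G \<le> enat d}"

end

theory Submission
  imports Defs
begin

text \<open>
  By robustness, the component of a graph in \<open>\<C>\<close> that meets a minimal blocking set of size
  \<open>\<beta>\<^sub>\<C>\<close> again lies in \<open>\<C>\<close> and carries that blocking set.  Two constructions then trade one unit of elimination distance for a
  larger minimal blocking set.  Doubling: take two disjoint copies of a connected graph with
  minimal blocking set \<open>Y\<close>, fix \<open>y \<in> Y\<close>, and add a vertex adjacent to \<open>y\<close> in the first copy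
  and to all of \<open>Y\<close> in the second; then \<open>(Y\<^sub>1 - {y}) \<union> Y\<^sub>2\<close> is a minimal blocking set of size
  \<open>2|Y| - 1\<close>, and deleting the new vertex leaves the two copies as the components.  Pendant: if
  \<open>{a}\<close> is a minimal blocking set, attaching a leaf \<open>w\<close> at \<open>a\<close> makes \<open>{w, a}\<close> one.  Iterating
  the doubling \<open>d\<close> times (after one pendant step when \<open>\<beta>\<^sub>\<C> = 1\<close>) gives the bound.  Since
  \<open>\<C>\<close> is closed under isomorphism, elimination distance survives the relabelling that makes
  the copies disjoint.
\<close>

section \<open>Vertex covers and blocking sets\<close>

abbreviation optimal_cover :: "graph \<Rightarrow> nat set \<Rightarrow> bool" where
  "optimal_cover G S \<equiv> vertex_cover G S \<and> card S = OPT G"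

lemma wf_graph_edgeE:
  assumes "wf_graph G" "e \<in> snd G"
  obtains u v where "e = {u, v}" "u \<noteq> v" "u \<in> fst G" "v \<in> fst G"
  using assms unfolding wf_graph_def by blast

lemma wf_graph_edge_subset: "wf_graph G \<Longrightarrow> e \<in> snd G \<Longrightarrow> e \<subseteq> fst G"
  by (metis wf_graph_edgeE empty_subsetI insert_subset)

lemma wf_graph_edge_nonempty: "wf_graph G \<Longrightarrow> e \<in> snd G \<Longrightarrow> e \<noteq> {}"
  by (metis wf_graph_edgeE insert_not_empty)

lemma finite_vertex_cover: "wf_graph G \<Longrightarrow> vertex_cover G S \<Longrightarrow> finite S"
  unfolding wf_graph_def vertex_cover_def by (blast intro: finite_subset)

lemma vertex_cover_subset: "vertex_cover G S \<Longrightarrow> S \<subseteq> fst G"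
  unfolding vertex_cover_def by simp

lemma vertex_cover_insert:
  "vertex_cover G S \<Longrightarrow> v \<in> fst G \<Longrightarrow> vertex_cover G (insert v S)"
  unfolding vertex_cover_def by blast

lemma OPT_le: "vertex_cover G S \<Longrightarrow> OPT G \<le> card S"
  unfolding OPT_def by (rule Least_le) blast

lemma optimal_cover_exists:
  assumes "wf_graph G" obtains S where "optimal_cover G S"
proof -
  have "vertex_cover G (fst G)"
    using wf_graph_edge_subset[OF assms] wf_graph_edge_nonempty[OF assms]
    unfolding vertex_cover_def by blast
  hence "\<exists>S. optimal_cover G S"
    unfolding OPT_def by (intro LeastI_ex[where P = "\<lambda>k. \<exists>S. vertex_cover G S \<and> card S = k"]) blast
  thus thesis using that by blast
qed

lemma OPT_eqI:
  "(\<And>S. vertex_cover G S \<Longrightarrow> n \<le> card S) \<Longrightarrow> vertex_cover G S\<^sub>0 \<Longrightarrow> card S\<^sub>0 = n \<Longrightarrow> OPT G = n"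
  unfolding OPT_def by (rule Least_equality) auto

lemma blocking_set_subset: "blocking_set G Y \<Longrightarrow> Y \<subseteq> fst G"
  unfolding blocking_set_def by simp

lemma blocking_set_card:
  "blocking_set G Y \<Longrightarrow> vertex_cover G S \<Longrightarrow> Y \<subseteq> S \<Longrightarrow> OPT G + 1 \<le> card S"
  using OPT_le[of G S] unfolding blocking_set_def by force

lemma blocking_setI:
  "Y \<subseteq> fst G \<Longrightarrow> (\<And>S. optimal_cover G S \<Longrightarrow> Y \<subseteq> S \<Longrightarrow> False) \<Longrightarrow> blocking_set G Y"
  unfolding blocking_set_def by blast

lemma blocking_set_mono:
  "blocking_set G Y \<Longrightarrow> Y \<subseteq> Z \<Longrightarrow> Z \<subseteq> fst G \<Longrightarrow> blocking_set G Z"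
  unfolding blocking_set_def by blast

lemma minimal_blocking_set_blocking: "minimal_blocking_set G Y \<Longrightarrow> blocking_set G Y"
  unfolding minimal_blocking_set_def by simp

lemma minimal_blocking_set_subset: "minimal_blocking_set G Y \<Longrightarrow> Y \<subseteq> fst G"
  unfolding minimal_blocking_set_def blocking_set_def by simp

lemma minimal_blocking_set_remove:
  assumes "minimal_blocking_set G Y" "x \<in> Y"
  obtains S where "optimal_cover G S" "Y - {x} \<subseteq> S"
proof -
  have "\<not> blocking_set G (Y - {x})" "Y - {x} \<subseteq> fst G"
    using assms unfolding minimal_blocking_set_def blocking_set_def by blast+
  thus thesis using that unfolding blocking_set_def by blast
qed

lemma minimal_blocking_setI:
  assumes "blocking_set G Y" "\<And>x. x \<in> Y \<Longrightarrow> \<exists>S. optimal_cover G S \<and> Y - {x} \<subseteq> S"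
  shows "minimal_blocking_set G Y"
  unfolding minimal_blocking_set_def
proof (intro conjI allI impI)
  fix Z assume "Z \<subset> Y"
  then obtain x where "x \<in> Y" "Z \<subseteq> Y - {x}" by blast
  with assms(2) show "\<not> blocking_set G Z" unfolding blocking_set_def by blast
qed (fact assms(1))

lemma minimal_blocking_set_cong:
  assumes "\<And>Z. Z \<subseteq> Y \<Longrightarrow> blocking_set G Z \<longleftrightarrow> blocking_set H Z"
  shows "minimal_blocking_set G Y \<longleftrightarrow> minimal_blocking_set H Y"
  using assms unfolding minimal_blocking_set_def by (meson order.strict_implies_order order_refl)

lemma finite_minimal_blocking_set_cards:
  "wf_graph G \<Longrightarrow> finite {card Y | Y. minimal_blocking_set G Y}"
  by (rule finite_subset[where B = "card ` Pow (fst G)"])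
     (auto simp: wf_graph_def dest: minimal_blocking_set_subset)

lemma card_le_beta: "wf_graph G \<Longrightarrow> minimal_blocking_set G Y \<Longrightarrow> card Y \<le> beta G"
  unfolding beta_def by (rule le_cSup_finite[OF finite_minimal_blocking_set_cards]) auto

lemma beta_attained:
  assumes "wf_graph G" "beta G \<noteq> 0"
  obtains Y where "minimal_blocking_set G Y" "card Y = beta G"
proof -
  let ?X = "{card Y | Y. minimal_blocking_set G Y}"
  have fin: "finite ?X" by (rule finite_minimal_blocking_set_cards[OF assms(1)])
  have "?X \<noteq> {}" using assms(2) unfolding beta_def by (metis Sup_nat_empty)
  hence "Sup ?X \<in> ?X" using Max_in[OF fin] cSup_eq_Max[OF fin] by simp
  then obtain Y where "minimal_blocking_set G Y" "card Y = Sup ?X" by auto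
  thus thesis using that unfolding beta_def by simp
qed

section \<open>Induced subgraphs and relabelling\<close>

lemma wf_graph_induced: "wf_graph G \<Longrightarrow> W \<subseteq> fst G \<Longrightarrow> wf_graph (induced G W)"
  unfolding wf_graph_def induced_def by (simp add: finite_subset) (metis insert_subset)

definition component :: "graph \<Rightarrow> nat \<Rightarrow> graph" where
  "component G u = induced G {v \<in> fst G. (u, v) \<in> (edge_rel G)\<^sup>*}"

lemma fst_component_subset: "fst (component G u) \<subseteq> fst G"
  unfolding component_def induced_def by auto

lemma wf_graph_component: "wf_graph G \<Longrightarrow> wf_graph (component G u)"
  unfolding component_def by (rule wf_graph_induced) auto

lemma components_eq_image: "components G = component G ` fst G"
  unfolding components_def component_def by blast

definition relabel :: "(nat \<Rightarrow> nat) \<Rightarrow> graph \<Rightarrow> graph" where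
  "relabel f G = (f ` fst G, (`) f ` snd G)"

lemma relabel_simps [simp]:
  "fst (relabel f G) = f ` fst G" "snd (relabel f G) = (`) f ` snd G"
  unfolding relabel_def by simp_all

lemma wf_graph_relabel:
  assumes "wf_graph G" "inj_on f (fst G)" shows "wf_graph (relabel f G)"
  unfolding wf_graph_def
proof (intro conjI ballI)
  show "finite (fst (relabel f G))" using assms(1) unfolding wf_graph_def by simp
  fix e' assume "e' \<in> snd (relabel f G)"
  then obtain e where "e \<in> snd G" "e' = f ` e" by auto
  then obtain u v where "e' = {f u, f v}" "u \<noteq> v" "u \<in> fst G" "v \<in> fst G"
    using wf_graph_edgeE[OF assms(1)] by (metis image_empty image_insert)
  with assms(2) show "\<exists>u v. e' = {u, v} \<and> u \<noteq> v \<and> u \<in> fst (relabel f G) \<and> v \<in> fst (relabel f G)"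
    by (metis inj_on_contraD image_eqI relabel_simps(1))
qed

lemma relabel_inverse:
  assumes "wf_graph G" "inj_on f (fst G)"
  shows "relabel (inv_into (fst G) f) (relabel f G) = G"
proof -
  have "inv_into (fst G) f ` f ` e = e" if "e \<in> snd G" for e
    using inv_into_image_cancel[OF assms(2) wf_graph_edge_subset[OF assms(1) that]] .
  hence "(`) (inv_into (fst G) f) ` (`) f ` snd G = snd G" by (simp add: image_image)
  moreover have "inv_into (fst G) f ` f ` fst G = fst G" using assms(2) by (simp add: inv_into_image_cancel)
  ultimately show ?thesis unfolding relabel_def by (simp add: prod_eq_iff)
qed

lemma vertex_cover_relabel: "vertex_cover G S \<Longrightarrow> vertex_cover (relabel f G) (f ` S)"
  unfolding vertex_cover_def by auto

lemma optimal_cover_relabel: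
  assumes "wf_graph G" "inj_on f (fst G)" "optimal_cover G S"
  shows "optimal_cover (relabel f G) (f ` S)"
proof -
  let ?g = "inv_into (fst G) f"
  have S: "S \<subseteq> fst G" using vertex_cover_subset assms(3) by blast
  have "card (f ` S) = OPT G" using assms(3) card_image[OF inj_on_subset[OF assms(2) S]] by simp
  moreover have "OPT G \<le> OPT (relabel f G)"
  proof -
    obtain S' where S': "optimal_cover (relabel f G) S'"
      using optimal_cover_exists wf_graph_relabel[OF assms(1,2)] by blast
    have "vertex_cover (relabel ?g (relabel f G)) (?g ` S')"
      using vertex_cover_relabel S' by blast
    hence "vertex_cover G (?g ` S')" by (simp only: relabel_inverse[OF assms(1,2)])
    hence "OPT G \<le> card (?g ` S')" by (rule OPT_le)
    also have "\<dots> \<le> card S'"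
      using card_image_le finite_vertex_cover[OF wf_graph_relabel[OF assms(1,2)]] S' by blast
    finally show ?thesis using S' by simp
  qed
  ultimately show ?thesis using vertex_cover_relabel assms(3) OPT_le by (metis le_antisym)
qed

lemma blocking_set_relabel_iff:
  assumes "wf_graph G" "inj_on f (fst G)" "Y \<subseteq> fst G"
  shows "blocking_set (relabel f G) (f ` Y) \<longleftrightarrow> blocking_set G Y"
proof
  assume "blocking_set (relabel f G) (f ` Y)"
  thus "blocking_set G Y"
    using assms optimal_cover_relabel[OF assms(1,2)] unfolding blocking_set_def by blast
next
  let ?g = "inv_into (fst G) f"
  assume Y: "blocking_set G Y"
  have "\<not> (optimal_cover (relabel f G) S' \<and> f ` Y \<subseteq> S')" for S'
  proof
    assume S': "optimal_cover (relabel f G) S' \<and> f ` Y \<subseteq> S'"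
    have "optimal_cover (relabel ?g (relabel f G)) (?g ` S')"
      using optimal_cover_relabel[OF wf_graph_relabel[OF assms(1,2)] inj_on_inv_into] S' by simp
    moreover have "Y \<subseteq> ?g ` S'"
      using S' image_mono inv_into_image_cancel[OF assms(2,3)] by metis
    ultimately show False using Y unfolding blocking_set_def relabel_inverse[OF assms(1,2)] by blast
  qed
  thus "blocking_set (relabel f G) (f ` Y)"
    using assms(3) Y unfolding blocking_set_def by auto
qed

lemma minimal_blocking_set_relabel:
  assumes "wf_graph G" "inj_on f (fst G)" "minimal_blocking_set G Y"
  shows "minimal_blocking_set (relabel f G) (f ` Y)"
proof (rule minimal_blocking_setI)
  have Y: "Y \<subseteq> fst G" by (rule minimal_blocking_set_subset[OF assms(3)])
  show "blocking_set (relabel f G) (f ` Y)"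
    using blocking_set_relabel_iff[OF assms(1,2) Y] minimal_blocking_set_blocking[OF assms(3)] by simp
  fix x' assume "x' \<in> f ` Y"
  then obtain x where x: "x \<in> Y" "x' = f x" by blast
  obtain S where S: "optimal_cover G S" "Y - {x} \<subseteq> S"
    using minimal_blocking_set_remove[OF assms(3) x(1)] .
  have "f ` Y - {x'} \<subseteq> f ` S" using S(2) x by blast
  thus "\<exists>S'. optimal_cover (relabel f G) S' \<and> f ` Y - {x'} \<subseteq> S'"
    using optimal_cover_relabel[OF assms(1,2) S(1)] by blast
qed

lemma relabel_in_class_iff:
  assumes "graph_class C" "wf_graph G" "inj_on f (fst G)"
  shows "relabel f G \<in> C \<longleftrightarrow> G \<in> C"
proof -
  have "isomorphic G (relabel f G)"
    unfolding isomorphic_def using assms(3) by (auto intro!: exI[of _ f] simp: bij_betw_def)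
  thus ?thesis using assms(1,2) unfolding graph_class_def by blast
qed

lemma reachable_relabel:
  "(u, v) \<in> (edge_rel G)\<^sup>* \<Longrightarrow> (f u, f v) \<in> (edge_rel (relabel f G))\<^sup>*"
proof (induction rule: rtrancl_induct)
  case (step a b)
  have "{a, b} \<in> snd G" using step(2) unfolding edge_rel_def by simp
  hence "f ` {a, b} \<in> (`) f ` snd G" by (rule imageI)
  hence "(f a, f b) \<in> edge_rel (relabel f G)" unfolding edge_rel_def by simp
  with step(3) show ?case by (rule rtrancl_into_rtrancl)
qed simp

lemma reachable_relabel_iff:
  assumes "wf_graph G" "inj_on f (fst G)" "u \<in> fst G" "v \<in> fst G"
  shows "(f u, f v) \<in> (edge_rel (relabel f G))\<^sup>* \<longleftrightarrow> (u, v) \<in> (edge_rel G)\<^sup>*"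
proof
  assume "(f u, f v) \<in> (edge_rel (relabel f G))\<^sup>*"
  from reachable_relabel[OF this, of "inv_into (fst G) f"]
  show "(u, v) \<in> (edge_rel G)\<^sup>*"
    by (simp add: relabel_inverse[OF assms(1,2)] inv_into_f_f[OF assms(2)] assms(3,4))
qed (rule reachable_relabel)

lemma connected_relabel_iff:
  assumes "wf_graph G" "inj_on f (fst G)"
  shows "connected_graph (relabel f G) \<longleftrightarrow> connected_graph G"
  using reachable_relabel_iff[OF assms] unfolding connected_graph_def by auto

lemma relabel_induced:
  assumes "wf_graph G" "inj_on f (fst G)" "W \<subseteq> fst G"
  shows "relabel f (induced G W) = induced (relabel f G) (f ` W)"
proof -
  have "f ` e \<subseteq> f ` W \<longleftrightarrow> e \<subseteq> W" if "e \<in> snd G" for e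
    using inj_on_image_mem_iff[OF assms(2) _ assms(3)] wf_graph_edge_subset[OF assms(1) that] by blast
  thus ?thesis unfolding relabel_def induced_def by auto
qed

lemma relabel_delete_vertex:
  assumes "wf_graph G" "inj_on f (fst G)" "v \<in> fst G"
  shows "relabel f (delete_vertex G v) = delete_vertex (relabel f G) (f v)"
  unfolding delete_vertex_def
  using relabel_induced[OF assms(1,2), of "fst G - {v}"] inj_on_image_set_diff[OF assms(2)] assms(3)
  by simp

lemma relabel_component:
  assumes "wf_graph G" "inj_on f (fst G)" "u \<in> fst G"
  shows "relabel f (component G u) = component (relabel f G) (f u)"
proof -
  have "f ` {v \<in> fst G. (u, v) \<in> (edge_rel G)\<^sup>*}
      = {v' \<in> fst (relabel f G). (f u, v') \<in> (edge_rel (relabel f G))\<^sup>*}"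
    using reachable_relabel_iff[OF assms] by auto
  thus ?thesis unfolding component_def by (simp add: relabel_induced[OF assms(1,2)])
qed

lemma components_relabel:
  assumes "wf_graph G" "inj_on f (fst G)"
  shows "components (relabel f G) = relabel f ` components G"
  unfolding components_eq_image using relabel_component[OF assms] by (auto simp: image_image)

lemma ed_le_relabel:
  assumes "graph_class C" "ed_le C G k" "wf_graph G" "inj_on f (fst G)"
  shows "ed_le C (relabel f G) k"
  using assms(2-4)
proof (induction rule: ed_le.induct)
  case (in_class G k)
  thus ?case using relabel_in_class_iff[OF assms(1)] ed_le.in_class by blast
next
  case (conn G v k)
  have "wf_graph (delete_vertex G v)" "inj_on f (fst (delete_vertex G v))"
    using conn.prems wf_graph_induced inj_on_subset[OF conn.prems(2), of "fst G - {v}"]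
    unfolding delete_vertex_def by (auto simp: induced_def)
  hence "ed_le C (relabel f (delete_vertex G v)) k" by (rule conn.IH)
  hence "ed_le C (delete_vertex (relabel f G) (f v)) k"
    using relabel_delete_vertex[OF conn.prems conn.hyps(3)] by simp
  moreover have "f v \<in> fst (relabel f G)" using conn.hyps(3) by simp
  ultimately show ?case
    using ed_le.conn relabel_in_class_iff[OF assms(1) conn.prems] connected_relabel_iff[OF conn.prems]
      conn.hyps by blast
next
  case (disc G k)
  have "wf_graph H \<and> inj_on f (fst H)" if H: "H \<in> components G" for H
  proof -
    obtain u where "H = component G u" using H unfolding components_eq_image by blast
    thus ?thesis
      using disc.prems wf_graph_component inj_on_subset[OF _ fst_component_subset] by blast
  qed
  hence "\<forall>H\<in>components (relabel f G). ed_le C H k"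
    using disc.IH unfolding components_relabel[OF disc.prems] by blast
  moreover have "relabel f G \<notin> C" "\<not> connected_graph (relabel f G)"
    using relabel_in_class_iff[OF assms(1) disc.prems] connected_relabel_iff[OF disc.prems]
      disc.hyps by auto
  ultimately show ?case using ed_le.disc by blast
qed

section \<open>Disjoint unions and components\<close>

definition graph_union :: "graph \<Rightarrow> graph \<Rightarrow> graph" where
  "graph_union G H = (fst G \<union> fst H, snd G \<union> snd H)"

lemma graph_union_simps [simp]:
  "fst (graph_union G H) = fst G \<union> fst H" "snd (graph_union G H) = snd G \<union> snd H"
  unfolding graph_union_def by simp_all

lemma graph_union_commute: "graph_union G H = graph_union H G"
  unfolding graph_union_def by (simp add: Un_commute)

lemma wf_graph_union: "wf_graph G \<Longrightarrow> wf_graph H \<Longrightarrow> wf_graph (graph_union G H)"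
  unfolding wf_graph_def by (auto 0 4)

lemma vertex_cover_union_iff:
  assumes "wf_graph G" "wf_graph H"
  shows "vertex_cover (graph_union G H) S \<longleftrightarrow>
    S \<subseteq> fst G \<union> fst H \<and> vertex_cover G (S \<inter> fst G) \<and> vertex_cover H (S \<inter> fst H)"
proof -
  have "e \<inter> (S \<inter> fst G) = e \<inter> S" if "e \<in> snd G" for e
    using wf_graph_edge_subset[OF assms(1) that] by blast
  moreover have "e \<inter> (S \<inter> fst H) = e \<inter> S" if "e \<in> snd H" for e
    using wf_graph_edge_subset[OF assms(2) that] by blast
  ultimately show ?thesis unfolding vertex_cover_def by (simp add: ball_Un)
qed

lemma card_disjoint_split:
  assumes "finite S" "S \<subseteq> A \<union> B" "A \<inter> B = {}"
  shows "card S = card (S \<inter> A) + card (S \<inter> B)"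
proof -
  have "S = (S \<inter> A) \<union> (S \<inter> B)" using assms(2) by blast
  hence "card S = card ((S \<inter> A) \<union> (S \<inter> B))" by simp
  also have "\<dots> = card (S \<inter> A) + card (S \<inter> B)"
    by (rule card_Un_disjoint) (use assms in auto)
  finally show ?thesis .
qed

locale disjoint_graphs =
  fixes G H :: graph
  assumes wf_left: "wf_graph G" and wf_right: "wf_graph H"
    and disjoint: "fst G \<inter> fst H = {}"
begin

lemma disjoint_graphs_swapped: "disjoint_graphs H G"
  using wf_left wf_right disjoint by unfold_locales (simp_all add: Int_commute)

lemma cover_card_split:
  assumes "vertex_cover (graph_union G H) S"
  shows "card S = card (S \<inter> fst G) + card (S \<inter> fst H)"
  using card_disjoint_split finite_vertex_cover[OF wf_graph_union[OF wf_left wf_right] assms]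
    vertex_cover_subset[OF assms] disjoint by simp

lemma covers_union:
  assumes "vertex_cover G S\<^sub>1" "vertex_cover H S\<^sub>2"
  shows "vertex_cover (graph_union G H) (S\<^sub>1 \<union> S\<^sub>2)" "(S\<^sub>1 \<union> S\<^sub>2) \<inter> fst G = S\<^sub>1"
    "(S\<^sub>1 \<union> S\<^sub>2) \<inter> fst H = S\<^sub>2"
  using assms disjoint unfolding vertex_cover_def by auto

lemma OPT_union: "OPT (graph_union G H) = OPT G + OPT H"
proof -
  obtain S\<^sub>1 where S1: "optimal_cover G S\<^sub>1" using optimal_cover_exists[OF wf_left] .
  obtain S\<^sub>2 where S2: "optimal_cover H S\<^sub>2" using optimal_cover_exists[OF wf_right] .
  show ?thesis
  proof (rule OPT_eqI)
    show cover: "vertex_cover (graph_union G H) (S\<^sub>1 \<union> S\<^sub>2)" using covers_union S1 S2 by blast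
    show "card (S\<^sub>1 \<union> S\<^sub>2) = OPT G + OPT H"
      using cover_card_split[OF cover] covers_union(2,3) S1 S2 by simp
  next
    fix S assume S: "vertex_cover (graph_union G H) S"
    hence "OPT G \<le> card (S \<inter> fst G)" "OPT H \<le> card (S \<inter> fst H)"
      using vertex_cover_union_iff[OF wf_left wf_right] OPT_le by simp_all
    thus "OPT G + OPT H \<le> card S" using cover_card_split[OF S] by simp
  qed
qed

lemma optimal_cover_union_iff:
  "optimal_cover (graph_union G H) S \<longleftrightarrow>
    S \<subseteq> fst G \<union> fst H \<and> optimal_cover G (S \<inter> fst G) \<and> optimal_cover H (S \<inter> fst H)"
  (is "?lhs \<longleftrightarrow> ?rhs")
proof
  assume L: ?lhs
  have V: "S \<subseteq> fst G \<union> fst H" "vertex_cover G (S \<inter> fst G)" "vertex_cover H (S \<inter> fst H)"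
    using L vertex_cover_union_iff[OF wf_left wf_right] by simp_all
  have "card (S \<inter> fst G) + card (S \<inter> fst H) = OPT G + OPT H"
    using cover_card_split[OF L[THEN conjunct1]] L OPT_union by linarith
  with OPT_le[OF V(2)] OPT_le[OF V(3)] show ?rhs using V by simp
next
  assume R: ?rhs
  hence cover: "vertex_cover (graph_union G H) S"
    using vertex_cover_union_iff[OF wf_left wf_right] by simp
  have "card S = OPT G + OPT H" using cover_card_split[OF cover] R by simp
  thus ?lhs using cover unfolding OPT_union by blast
qed

lemma optimal_covers_union:
  assumes "optimal_cover G S\<^sub>1" "optimal_cover H S\<^sub>2"
  shows "optimal_cover (graph_union G H) (S\<^sub>1 \<union> S\<^sub>2)"
proof -
  have "S\<^sub>1 \<union> S\<^sub>2 \<subseteq> fst G \<union> fst H" using assms vertex_cover_subset by blast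
  thus ?thesis
    unfolding optimal_cover_union_iff covers_union(2,3)[OF assms[THEN conjunct1]] using assms by blast
qed

lemma blocking_set_union_left_iff:
  assumes "Y \<subseteq> fst G"
  shows "blocking_set (graph_union G H) Y \<longleftrightarrow> blocking_set G Y"
proof -
  obtain S\<^sub>2 where S2: "optimal_cover H S\<^sub>2" using optimal_cover_exists[OF wf_right] .
  have "(\<exists>S. optimal_cover (graph_union G H) S \<and> Y \<subseteq> S) \<longleftrightarrow> (\<exists>S. optimal_cover G S \<and> Y \<subseteq> S)"
  proof
    assume "\<exists>S. optimal_cover (graph_union G H) S \<and> Y \<subseteq> S"
    then obtain S where "optimal_cover (graph_union G H) S" "Y \<subseteq> S" by blast
    hence "optimal_cover G (S \<inter> fst G)" "Y \<subseteq> S \<inter> fst G"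
      using optimal_cover_union_iff assms by auto
    thus "\<exists>S. optimal_cover G S \<and> Y \<subseteq> S" by blast
  next
    assume "\<exists>S. optimal_cover G S \<and> Y \<subseteq> S"
    then obtain S\<^sub>1 where S1: "optimal_cover G S\<^sub>1" "Y \<subseteq> S\<^sub>1" by blast
    have "optimal_cover (graph_union G H) (S\<^sub>1 \<union> S\<^sub>2)" by (rule optimal_covers_union[OF S1(1) S2])
    thus "\<exists>S. optimal_cover (graph_union G H) S \<and> Y \<subseteq> S" using S1(2) by blast
  qed
  thus ?thesis using assms unfolding blocking_set_def by auto
qed

lemma blocking_set_union_cases:
  assumes "blocking_set (graph_union G H) Y"
  shows "blocking_set G (Y \<inter> fst G) \<or> blocking_set H (Y \<inter> fst H)"
proof (rule ccontr)
  assume "\<not> ?thesis"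
  then obtain S\<^sub>1 S\<^sub>2 where S: "optimal_cover G S\<^sub>1" "Y \<inter> fst G \<subseteq> S\<^sub>1"
      "optimal_cover H S\<^sub>2" "Y \<inter> fst H \<subseteq> S\<^sub>2"
    unfolding blocking_set_def by blast
  have "optimal_cover (graph_union G H) (S\<^sub>1 \<union> S\<^sub>2)" by (rule optimal_covers_union[OF S(1,3)])
  moreover have "Y \<subseteq> S\<^sub>1 \<union> S\<^sub>2" using S(2,4) blocking_set_subset[OF assms] by auto
  ultimately show False using assms unfolding blocking_set_def by blast
qed

text \<open>A blocking set of a disjoint union blocks one of the two sides, so a minimal one lies
  entirely in that side.\<close>

lemma minimal_blocking_set_union_left:
  assumes "minimal_blocking_set (graph_union G H) Y" "Y \<inter> fst G \<noteq> {}"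
  shows "Y \<subseteq> fst G" "minimal_blocking_set G Y"
proof -
  interpret swapped: disjoint_graphs H G by (rule disjoint_graphs_swapped)
  have minimal: "Z = Y" if "Z \<subseteq> Y" "blocking_set (graph_union G H) Z" for Z
    using assms(1) that unfolding minimal_blocking_set_def by blast
  from blocking_set_union_cases[OF minimal_blocking_set_blocking[OF assms(1)]]
  show Y: "Y \<subseteq> fst G"
  proof
    assume "blocking_set G (Y \<inter> fst G)"
    hence "blocking_set (graph_union G H) (Y \<inter> fst G)" using blocking_set_union_left_iff by simp
    hence "Y \<inter> fst G = Y" using minimal by blast
    thus ?thesis by blast
  next
    assume "blocking_set H (Y \<inter> fst H)"
    hence "blocking_set (graph_union G H) (Y \<inter> fst H)"
      using swapped.blocking_set_union_left_iff graph_union_commute by simp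
    hence "Y \<inter> fst H = Y" using minimal by blast
    thus ?thesis using assms(2) disjoint by blast
  qed
  show "minimal_blocking_set G Y"
    using minimal_blocking_set_cong[of Y "graph_union G H" G] blocking_set_union_left_iff Y assms(1)
    by (meson order_trans)
qed

lemma reachable_union_stays_left:
  assumes "(u, x) \<in> (edge_rel (graph_union G H))\<^sup>*" "u \<in> fst G"
  shows "x \<in> fst G"
  using assms
proof (induction rule: rtrancl_induct)
  case (step a b)
  hence "{a, b} \<in> snd G \<or> {a, b} \<in> snd H" "a \<in> fst G" unfolding edge_rel_def by auto
  thus ?case
    using wf_graph_edge_subset[OF wf_left] wf_graph_edge_subset[OF wf_right] disjoint by blast
qed

lemma component_union_left:
  assumes "connected_graph G" "u \<in> fst G"
  shows "component (graph_union G H) u = G"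
proof -
  let ?U = "graph_union G H"
  have "edge_rel G \<subseteq> edge_rel ?U" unfolding edge_rel_def by auto
  hence "(u, v) \<in> (edge_rel ?U)\<^sup>*" if "v \<in> fst G" for v
    using assms that rtrancl_mono unfolding connected_graph_def by blast
  hence "{v \<in> fst ?U. (u, v) \<in> (edge_rel ?U)\<^sup>*} = fst G"
    using reachable_union_stays_left assms(2) by auto
  moreover have "{e \<in> snd ?U. e \<subseteq> fst G} = snd G"
    using wf_graph_edge_subset[OF wf_left] wf_graph_edge_subset[OF wf_right]
      wf_graph_edge_nonempty[OF wf_right] disjoint by fastforce
  ultimately show ?thesis unfolding component_def induced_def by simp
qed

lemma union_not_connected:
  assumes "fst G \<noteq> {}" "fst H \<noteq> {}"
  shows "\<not> connected_graph (graph_union G H)"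
  using reachable_union_stays_left assms disjoint unfolding connected_graph_def by fastforce

lemma ed_le_union:
  assumes "connected_graph G" "connected_graph H" "fst G \<noteq> {}" "fst H \<noteq> {}"
    "ed_le C G k" "ed_le C H k"
  shows "ed_le C (graph_union G H) k"
proof (cases "graph_union G H \<in> C")
  case False
  interpret swapped: disjoint_graphs H G by (rule disjoint_graphs_swapped)
  have "component (graph_union G H) u \<in> {G, H}" if "u \<in> fst G \<union> fst H" for u
    using that component_union_left[OF assms(1)] swapped.component_union_left[OF assms(2)]
      graph_union_commute by auto
  hence "\<forall>K\<in>components (graph_union G H). ed_le C K k"
    using assms(5,6) unfolding components_eq_image by fastforce
  thus ?thesis using ed_le.disc[OF False union_not_connected[OF assms(3,4)]] by blast
qed (rule ed_le.in_class)

end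

lemma component_closed:
  assumes "wf_graph G" "e \<in> snd G"
  shows "e \<subseteq> fst (component G u) \<or> e \<subseteq> fst G - fst (component G u)"
proof -
  obtain p q where e: "e = {p, q}" "p \<in> fst G" "q \<in> fst G"
    using wf_graph_edgeE[OF assms] by metis
  have "(p, q) \<in> edge_rel G" "(q, p) \<in> edge_rel G"
    using assms(2) e(1) unfolding edge_rel_def by (auto simp: insert_commute)
  hence "(u, p) \<in> (edge_rel G)\<^sup>* \<longleftrightarrow> (u, q) \<in> (edge_rel G)\<^sup>*"
    by (meson rtrancl.rtrancl_into_rtrancl)
  thus ?thesis using e unfolding component_def induced_def by auto
qed

lemma graph_union_component_rest:
  assumes "wf_graph G"
  shows "G = graph_union (component G u) (induced G (fst G - fst (component G u)))"
  using component_closed[OF assms] fst_component_subset[of G u]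
  unfolding graph_union_def component_def induced_def by (auto simp: prod_eq_iff)

lemma connected_component:
  assumes "wf_graph G"
  shows "connected_graph (component G u)"
proof -
  let ?W = "fst (component G u)"
  have "(u, v) \<in> (edge_rel (component G u))\<^sup>*" if "(u, v) \<in> (edge_rel G)\<^sup>*" for v
    using that
  proof (induction rule: rtrancl_induct)
    case (step a b)
    have ab: "{a, b} \<in> snd G" using step.hyps(2) unfolding edge_rel_def by simp
    hence "{a, b} \<subseteq> ?W"
      using wf_graph_edge_subset[OF assms ab] step.hyps rtrancl_into_rtrancl[OF step.hyps]
      unfolding component_def induced_def by auto
    hence "(a, b) \<in> edge_rel (component G u)"
      using ab(1) unfolding component_def induced_def edge_rel_def by simp
    with step.IH show ?case by (rule rtrancl_into_rtrancl)
  qed simp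
  moreover have "sym (edge_rel (component G u))"
    unfolding edge_rel_def sym_def by (simp add: insert_commute)
  ultimately show ?thesis
    unfolding connected_graph_def component_def induced_def
    by (simp, meson rtrancl_trans sym_rtrancl symD)
qed

lemma minimal_blocking_set_in_component:
  assumes "robust C" "G \<in> C" "wf_graph G" "minimal_blocking_set G Y" "Y \<noteq> {}"
  obtains K where "wf_graph K" "connected_graph K" "K \<in> C" "minimal_blocking_set K Y"
proof -
  obtain y where y: "y \<in> Y" using assms(5) by blast
  hence y_vertex: "y \<in> fst G" using minimal_blocking_set_subset[OF assms(4)] by blast
  let ?K = "component G y"
  let ?L = "induced G (fst G - fst ?K)"
  interpret disjoint_graphs ?K ?L
    using wf_graph_component[OF assms(3)] wf_graph_induced[OF assms(3)]
    by unfold_locales (auto simp: induced_def)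
  have "minimal_blocking_set (graph_union ?K ?L) Y"
    using assms(4) graph_union_component_rest[OF assms(3)] by simp
  moreover have "y \<in> fst ?K" using y_vertex unfolding component_def induced_def by simp
  ultimately have "minimal_blocking_set ?K Y" using minimal_blocking_set_union_left y by blast
  moreover have "?K \<in> C"
    using assms(1-3) y_vertex unfolding robust_def components_eq_image by blast
  ultimately show thesis
    using that wf_graph_component[OF assms(3)] connected_component[OF assms(3)] by blast
qed

section \<open>Adding a vertex\<close>

definition add_vertex :: "nat \<Rightarrow> nat set \<Rightarrow> graph \<Rightarrow> graph" where
  "add_vertex w N G = (insert w (fst G), snd G \<union> (\<lambda>x. {w, x}) ` N)"

lemma add_vertex_simps [simp]:
  "fst (add_vertex w N G) = insert w (fst G)" "snd (add_vertex w N G) = snd G \<union> (\<lambda>x. {w, x}) ` N"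
  unfolding add_vertex_def by simp_all

lemma wf_graph_add_vertex:
  assumes "wf_graph G" "w \<notin> fst G" "N \<subseteq> fst G"
  shows "wf_graph (add_vertex w N G)"
  using assms unfolding wf_graph_def by (auto 0 4)

lemma delete_vertex_add_vertex:
  assumes "wf_graph G" "w \<notin> fst G"
  shows "delete_vertex (add_vertex w N G) w = G"
proof -
  have "{e \<in> snd G \<union> (\<lambda>x. {w, x}) ` N. e \<subseteq> fst G} = snd G"
    using wf_graph_edge_subset[OF assms(1)] assms(2) by auto
  thus ?thesis unfolding delete_vertex_def induced_def using assms(2) by (simp add: prod_eq_iff)
qed

lemma connected_add_vertex:
  assumes "\<forall>v\<in>fst G. \<exists>x\<in>N. (v, x) \<in> (edge_rel G)\<^sup>*"
  shows "connected_graph (add_vertex w N G)"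
proof -
  let ?R = "edge_rel (add_vertex w N G)"
  have "edge_rel G \<subseteq> ?R" unfolding edge_rel_def by auto
  hence "(edge_rel G)\<^sup>* \<subseteq> ?R\<^sup>*" by (rule rtrancl_mono)
  moreover have "(x, w) \<in> ?R" if "x \<in> N" for x
    using that unfolding edge_rel_def by (auto simp: insert_commute)
  ultimately have to_w: "(v, w) \<in> ?R\<^sup>*" if "v \<in> fst (add_vertex w N G)" for v
    using that assms by (metis in_mono insert_iff add_vertex_simps(1) rtrancl.simps)
  have "sym ?R" unfolding edge_rel_def sym_def by (simp add: insert_commute)
  thus ?thesis unfolding connected_graph_def
    using to_w by (meson rtrancl_trans sym_rtrancl symD)
qed

context disjoint_graphs
begin

lemma connected_add_vertex_union:
  assumes "connected_graph G" "connected_graph H" "N \<inter> fst G \<noteq> {}" "N \<inter> fst H \<noteq> {}"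
  shows "connected_graph (add_vertex w N (graph_union G H))"
proof (rule connected_add_vertex, intro ballI)
  let ?R = "(edge_rel (graph_union G H))\<^sup>*"
  have "edge_rel G \<subseteq> edge_rel (graph_union G H)" "edge_rel H \<subseteq> edge_rel (graph_union G H)"
    unfolding edge_rel_def by auto
  hence mono: "(edge_rel G)\<^sup>* \<subseteq> ?R" "(edge_rel H)\<^sup>* \<subseteq> ?R" using rtrancl_mono by blast+
  fix v assume "v \<in> fst (graph_union G H)"
  then consider "v \<in> fst G" | "v \<in> fst H" by auto
  thus "\<exists>x\<in>N. (v, x) \<in> ?R"
  proof cases
    case 1
    obtain x where "x \<in> N" "x \<in> fst G" using assms(3) by blast
    thus ?thesis using 1 assms(1) mono(1) unfolding connected_graph_def by blast
  next
    case 2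
    obtain x where "x \<in> N" "x \<in> fst H" using assms(4) by blast
    thus ?thesis using 2 assms(2) mono(2) unfolding connected_graph_def by blast
  qed
qed

end

lemma ed_le_add_vertex:
  assumes "connected_graph (add_vertex w N G)" "wf_graph G" "w \<notin> fst G" "ed_le C G k"
  shows "ed_le C (add_vertex w N G) (Suc k)"
proof (cases "add_vertex w N G \<in> C")
  case False
  thus ?thesis using ed_le.conn[OF False assms(1), of w k] delete_vertex_add_vertex[OF assms(2,3)] assms(4)
    by simp
qed (rule ed_le.in_class)

lemma vertex_cover_add_vertex_iff:
  assumes "wf_graph G" "w \<notin> fst G"
  shows "vertex_cover (add_vertex w N G) S \<longleftrightarrow>
    S \<subseteq> insert w (fst G) \<and> vertex_cover G (S - {w}) \<and> (w \<notin> S \<longrightarrow> N \<subseteq> S)"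
proof -
  have "e \<inter> (S - {w}) = e \<inter> S" if "e \<in> snd G" for e
    using wf_graph_edge_subset[OF assms(1) that] assms(2) by blast
  moreover have "(\<forall>x\<in>N. {w, x} \<inter> S \<noteq> {}) \<longleftrightarrow> (w \<notin> S \<longrightarrow> N \<subseteq> S)" by auto
  ultimately show ?thesis unfolding vertex_cover_def by (auto simp: ball_Un)
qed

text \<open>When the neighbourhood \<open>N\<close> of the new vertex is blocking, no optimum of \<open>G\<close> covers the new
  edges for free; hence an optimum of the extension is an optimum of \<open>G\<close> plus \<open>w\<close>, or avoids \<open>w\<close>
  at the price of one extra vertex.\<close>

locale blocked_extension =
  fixes G :: graph and w :: nat and N :: "nat set"
  assumes wf: "wf_graph G" and fresh: "w \<notin> fst G" and blocking: "blocking_set G N"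
begin

abbreviation "G' \<equiv> add_vertex w N G"

lemma wf_extension: "wf_graph G'"
  using wf_graph_add_vertex[OF wf fresh blocking_set_subset[OF blocking]] .

lemma cover_iff: "vertex_cover G' S \<longleftrightarrow>
    S \<subseteq> insert w (fst G) \<and> vertex_cover G (S - {w}) \<and> (w \<notin> S \<longrightarrow> N \<subseteq> S)"
  by (rule vertex_cover_add_vertex_iff[OF wf fresh])

lemma new_vertex_notin_cover: "vertex_cover G T \<Longrightarrow> w \<notin> T"
  using vertex_cover_subset fresh by blast

lemma cover_avoiding_iff:
  assumes "w \<notin> S" shows "vertex_cover G' S \<longleftrightarrow> vertex_cover G S \<and> N \<subseteq> S"
proof -
  have "vertex_cover G S \<Longrightarrow> S \<subseteq> insert w (fst G)" using vertex_cover_subset[of G S] by blast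
  thus ?thesis using cover_iff[of S] assms by auto
qed

lemma cover_insert: "vertex_cover G T \<Longrightarrow> vertex_cover G' (insert w T)"
  using cover_iff[of "insert w T"] vertex_cover_subset[of G T] new_vertex_notin_cover by auto

lemma card_insert_new: "vertex_cover G T \<Longrightarrow> card (insert w T) = card T + 1"
  using finite_vertex_cover[OF wf] new_vertex_notin_cover by simp

lemma OPT_extension: "OPT G' = OPT G + 1"
proof -
  obtain S\<^sub>0 where S0: "optimal_cover G S\<^sub>0" using optimal_cover_exists[OF wf] .
  show ?thesis
  proof (rule OPT_eqI)
    show "vertex_cover G' (insert w S\<^sub>0)" using cover_insert S0 by blast
    show "card (insert w S\<^sub>0) = OPT G + 1" using card_insert_new S0 by simp
  next
    fix S assume S: "vertex_cover G' S"
    show "OPT G + 1 \<le> card S"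
    proof (cases "w \<in> S")
      case True
      hence "card S = card (S - {w}) + 1"
        using card.remove[OF finite_vertex_cover[OF wf_extension S]] by simp
      moreover have "vertex_cover G (S - {w})" using S cover_iff[of S] by simp
      ultimately show ?thesis using OPT_le by fastforce
    next
      case False
      hence "vertex_cover G S" "N \<subseteq> S" using S cover_avoiding_iff by simp_all
      thus ?thesis using blocking_set_card[OF blocking] by blast
    qed
  qed
qed

lemma optimal_cover_insert: "optimal_cover G T \<Longrightarrow> optimal_cover G' (insert w T)"
  using cover_insert card_insert_new OPT_extension by simp

lemma optimal_cover_remove:
  assumes "optimal_cover G' S" "w \<in> S"
  shows "optimal_cover G (S - {w})"
proof -
  have "card S = card (S - {w}) + 1"
    using card.remove[OF finite_vertex_cover[OF wf_extension] assms(2)] assms(1) by simp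
  moreover have "vertex_cover G (S - {w})" using assms cover_iff[of S] by simp
  ultimately show ?thesis using assms OPT_extension by simp
qed

lemma optimal_cover_avoiding_iff:
  assumes "w \<notin> S"
  shows "optimal_cover G' S \<longleftrightarrow> vertex_cover G S \<and> N \<subseteq> S \<and> card S = OPT G + 1"
  using cover_avoiding_iff[OF assms] OPT_extension by simp

end

lemma minimal_blocking_set_pendant:
  assumes "wf_graph G" "w \<notin> fst G" "minimal_blocking_set G {a}"
  shows "minimal_blocking_set (add_vertex w {a} G) {w, a}"
proof -
  interpret blocked_extension G w "{a}"
    using assms minimal_blocking_set_blocking by unfold_locales auto
  have a: "a \<in> fst G" "w \<noteq> a" using minimal_blocking_set_subset[OF assms(3)] assms(2) by auto
  obtain S\<^sub>0 where S0: "optimal_cover G S\<^sub>0" using optimal_cover_exists[OF wf] .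
  show ?thesis
  proof (rule minimal_blocking_setI)
    show "blocking_set G' {w, a}"
    proof (rule blocking_setI)
      fix S assume "optimal_cover G' S" "{w, a} \<subseteq> S"
      hence "optimal_cover G (S - {w})" "{a} \<subseteq> S - {w}" using optimal_cover_remove a(2) by auto
      thus False using blocking unfolding blocking_set_def by blast
    qed (use a in auto)
  next
    fix x assume "x \<in> {w, a}"
    moreover have "optimal_cover G' (insert a S\<^sub>0)"
    proof -
      have "a \<notin> S\<^sub>0" using S0 blocking unfolding blocking_set_def by blast
      hence "card (insert a S\<^sub>0) = OPT G + 1"
        using S0 finite_vertex_cover[OF wf] by simp
      moreover have "vertex_cover G (insert a S\<^sub>0)" using vertex_cover_insert S0 a(1) by blast
      ultimately show ?thesis
        using optimal_cover_avoiding_iff[of "insert a S\<^sub>0"] new_vertex_notin_cover[OF S0[THEN conjunct1]]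
          a(2) by simp
    qed
    ultimately show "\<exists>S. optimal_cover G' S \<and> {w, a} - {x} \<subseteq> S"
      using optimal_cover_insert[OF S0] by blast
  qed
qed

section \<open>Doubling a minimal blocking set\<close>

locale bridged_graphs = disjoint_graphs G H for G H +
  fixes w y :: nat and Y Z :: "nat set"
  assumes fresh: "w \<notin> fst G \<union> fst H"
    and minimal_left: "minimal_blocking_set G Y" and y: "y \<in> Y"
    and minimal_right: "minimal_blocking_set H Z" and right_nonempty: "Z \<noteq> {}"
begin

lemma left_subset: "Y \<subseteq> fst G" and right_subset: "Z \<subseteq> fst H"
  using minimal_blocking_set_subset minimal_left minimal_right by blast+

lemma right_blocking_in_union: "blocking_set (graph_union G H) Z"
proof -
  interpret swapped: disjoint_graphs H G by (rule disjoint_graphs_swapped)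
  show ?thesis
    using swapped.blocking_set_union_left_iff[OF right_subset] graph_union_commute
      minimal_blocking_set_blocking[OF minimal_right] by simp
qed

sublocale ext: blocked_extension "graph_union G H" w "insert y Z"
proof
  show "wf_graph (graph_union G H)" using wf_graph_union wf_left wf_right .
  show "w \<notin> fst (graph_union G H)" using fresh by simp
  show "blocking_set (graph_union G H) (insert y Z)"
    using blocking_set_mono[OF right_blocking_in_union] y left_subset right_subset by auto
qed

lemma blocking_bridge: "blocking_set ext.G' ((Y - {y}) \<union> Z)"
proof (rule blocking_setI)
  show "(Y - {y}) \<union> Z \<subseteq> fst ext.G'" using left_subset right_subset by auto
  fix S assume S: "optimal_cover ext.G' S" "(Y - {y}) \<union> Z \<subseteq> S"
  show False
  proof (cases "w \<in> S")
    case True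
    hence "optimal_cover (graph_union G H) (S - {w})" using ext.optimal_cover_remove S(1) by blast
    hence "optimal_cover H ((S - {w}) \<inter> fst H)" using optimal_cover_union_iff by blast
    moreover have "Z \<subseteq> (S - {w}) \<inter> fst H" using S(2) right_subset fresh by blast
    ultimately show False using minimal_blocking_set_blocking[OF minimal_right]
      unfolding blocking_set_def by blast
  next
    case False
    hence S': "vertex_cover (graph_union G H) S" "insert y Z \<subseteq> S"
        "card S = OPT (graph_union G H) + 1"
      using ext.optimal_cover_avoiding_iff S(1) by simp_all
    have "Y \<subseteq> S \<inter> fst G" "Z \<subseteq> S \<inter> fst H" using S(2) S'(2) left_subset right_subset by auto
    moreover have "vertex_cover G (S \<inter> fst G)" "vertex_cover H (S \<inter> fst H)"
      using S'(1) vertex_cover_union_iff[OF wf_left wf_right] by simp_all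
    ultimately have "OPT G + 1 \<le> card (S \<inter> fst G)" "OPT H + 1 \<le> card (S \<inter> fst H)"
      using blocking_set_card minimal_blocking_set_blocking minimal_left minimal_right by blast+
    thus False using cover_card_split[OF S'(1)] S'(3) OPT_union by simp
  qed
qed

lemma optimal_cover_omitting_right:
  assumes "x \<in> Z"
  obtains S where "optimal_cover ext.G' S" "(Y - {y}) \<union> Z - {x} \<subseteq> S"
proof -
  obtain S\<^sub>1 where S1: "optimal_cover G S\<^sub>1" "Y - {y} \<subseteq> S\<^sub>1"
    using minimal_blocking_set_remove[OF minimal_left y] .
  obtain S\<^sub>2 where S2: "optimal_cover H S\<^sub>2" "Z - {x} \<subseteq> S\<^sub>2"
    using minimal_blocking_set_remove[OF minimal_right assms] .
  have "optimal_cover ext.G' (insert w (S\<^sub>1 \<union> S\<^sub>2))"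
    using ext.optimal_cover_insert optimal_covers_union S1(1) S2(1) by blast
  moreover have "(Y - {y}) \<union> Z - {x} \<subseteq> insert w (S\<^sub>1 \<union> S\<^sub>2)" using S1(2) S2(2) by blast
  ultimately show thesis using that by blast
qed

text \<open>Removing a vertex \<open>x \<noteq> y\<close> of the left part frees a cover of \<open>G\<close> containing \<open>y\<close>; the bridge
  vertex is then covered through its whole neighbourhood at the price of one extra vertex on the
  right.\<close>

lemma optimal_cover_omitting_left:
  assumes "x \<in> Y" "x \<noteq> y"
  obtains S where "optimal_cover ext.G' S" "(Y - {y}) \<union> Z - {x} \<subseteq> S"
proof -
  obtain S\<^sub>1 where S1: "optimal_cover G S\<^sub>1" "Y - {x} \<subseteq> S\<^sub>1"
    using minimal_blocking_set_remove[OF minimal_left assms(1)] .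
  obtain b where b: "b \<in> Z" using right_nonempty by blast
  obtain S\<^sub>2 where S2: "optimal_cover H S\<^sub>2" "Z - {b} \<subseteq> S\<^sub>2"
    using minimal_blocking_set_remove[OF minimal_right b] .
  let ?S = "S\<^sub>1 \<union> insert b S\<^sub>2"
  have T2: "vertex_cover H (insert b S\<^sub>2)"
    using vertex_cover_insert S2(1) b right_subset by blast
  have cover: "vertex_cover (graph_union G H) ?S" using covers_union(1)[OF S1(1)[THEN conjunct1] T2] .
  have "card ?S \<le> card S\<^sub>1 + card (insert b S\<^sub>2)" by (rule card_Un_le)
  also have "\<dots> \<le> OPT (graph_union G H) + 1"
    using S1(1) S2(1) finite_vertex_cover[OF wf_right] OPT_union by (simp add: card_insert_if)
  finally have upper: "card ?S \<le> OPT (graph_union G H) + 1" .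
  have w: "w \<notin> ?S" using ext.new_vertex_notin_cover[OF cover] .
  have N: "insert y Z \<subseteq> ?S" using S1(2) S2(2) assms(2) y by auto
  have "vertex_cover ext.G' ?S" using ext.cover_avoiding_iff[OF w] cover N by simp
  hence "OPT (graph_union G H) + 1 \<le> card ?S" using OPT_le ext.OPT_extension by metis
  hence "optimal_cover ext.G' ?S" using upper ext.optimal_cover_avoiding_iff[OF w] cover N by simp
  moreover have "(Y - {y}) \<union> Z - {x} \<subseteq> ?S" using S1(2) S2(2) by blast
  ultimately show thesis using that by blast
qed

lemma minimal_blocking_set_bridge: "minimal_blocking_set ext.G' ((Y - {y}) \<union> Z)"
proof (rule minimal_blocking_setI[OF blocking_bridge])
  fix x assume "x \<in> (Y - {y}) \<union> Z"
  then consider "x \<in> Z" | "x \<in> Y" "x \<noteq> y" by blast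
  thus "\<exists>S. optimal_cover ext.G' S \<and> (Y - {y}) \<union> Z - {x} \<subseteq> S"
  proof cases
    case 1
    thus ?thesis using optimal_cover_omitting_right by blast
  next
    case 2
    thus ?thesis using optimal_cover_omitting_left by blast
  qed
qed

lemma connected_bridge:
  assumes "connected_graph G" "connected_graph H"
  shows "connected_graph ext.G'"
  by (rule connected_add_vertex_union[OF assms])
     (use y left_subset right_subset right_nonempty in blast)+

lemma ed_le_bridge:
  assumes "connected_graph G" "connected_graph H" "ed_le C G k" "ed_le C H k"
  shows "ed_le C ext.G' (Suc k)"
proof (rule ed_le_add_vertex[OF connected_bridge[OF assms(1,2)]])
  show "wf_graph (graph_union G H)" using wf_graph_union[OF wf_left wf_right] .
  show "w \<notin> fst (graph_union G H)" using fresh by simp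
  show "ed_le C (graph_union G H) k"
    by (rule ed_le_union[OF assms(1,2) _ _ assms(3,4)])
       (use y left_subset right_subset right_nonempty in blast)+
qed

lemma card_bridge_blocking_set: "card ((Y - {y}) \<union> Z) = card Y - 1 + card Z"
proof -
  have "finite Y" "finite Z"
    using finite_subset[OF left_subset] finite_subset[OF right_subset] wf_left wf_right
    unfolding wf_graph_def by simp_all
  moreover have "(Y - {y}) \<inter> Z = {}" using left_subset right_subset disjoint by blast
  ultimately show ?thesis using card_Un_disjoint[of "Y - {y}" Z] card_Diff_singleton[OF y] by simp
qed

end

section \<open>Realizable sizes\<close>

text \<open>Connectivity is part of the invariant because the doubling step needs the two copies to be
  exactly the components left after deleting the bridge vertex.\<close>

definition realizable :: "graph set \<Rightarrow> nat \<Rightarrow> nat \<Rightarrow> bool" where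
  "realizable C d m \<longleftrightarrow>
    (\<exists>G Y. wf_graph G \<and> connected_graph G \<and> ed_le C G d \<and> minimal_blocking_set G Y \<and> card Y = m)"

lemma realizable_in_class:
  assumes "robust C" "G \<in> C" "wf_graph G" "beta G \<noteq> 0"
  shows "realizable C 0 (beta G)"
proof -
  obtain Y where Y: "minimal_blocking_set G Y" "card Y = beta G"
    using beta_attained[OF assms(3,4)] .
  have "Y \<noteq> {}" using Y(2) assms(4) by auto
  then obtain K where "wf_graph K" "connected_graph K" "K \<in> C" "minimal_blocking_set K Y"
    using minimal_blocking_set_in_component[OF assms(1-3) Y(1)] by blast
  thus ?thesis using Y(2) ed_le.in_class unfolding realizable_def by blast
qed

lemma realizable_pendant:
  assumes "realizable C d 1"
  shows "realizable C (Suc d) 2"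
proof -
  obtain G Y where G: "wf_graph G" "connected_graph G" "ed_le C G d" "minimal_blocking_set G Y"
    "card Y = 1" using assms unfolding realizable_def by blast
  obtain a where a: "Y = {a}" using G(5) card_1_singletonE by blast
  have a_vertex: "a \<in> fst G" using minimal_blocking_set_subset[OF G(4)] a by simp
  obtain w where w: "w \<notin> fst G" using ex_new_if_finite[OF infinite_UNIV_nat] G(1)
    unfolding wf_graph_def by blast
  let ?J = "add_vertex w {a} G"
  have "wf_graph ?J" using wf_graph_add_vertex G(1) w a_vertex by simp
  moreover have "connected_graph ?J"
    by (rule connected_add_vertex) (use G(2) a_vertex in \<open>auto simp: connected_graph_def\<close>)
  moreover have "ed_le C ?J (Suc d)" using ed_le_add_vertex[OF _ G(1) w G(3)] calculation(2) .
  moreover have "minimal_blocking_set ?J {w, a}"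
    using minimal_blocking_set_pendant[OF G(1) w] G(4) a by simp
  moreover have "card {w, a} = 2" using w a_vertex by (cases "w = a") auto
  ultimately show ?thesis unfolding realizable_def by blast
qed

lemma realizable_double:
  assumes "graph_class C" "realizable C d m" "m \<ge> 1"
  shows "realizable C (Suc d) (2 * m - 1)"
proof -
  obtain G Y where G: "wf_graph G" "connected_graph G" "ed_le C G d" "minimal_blocking_set G Y"
    "card Y = m" using assms(2) unfolding realizable_def by blast
  obtain y where y_in: "y \<in> Y" using G(5) assms(3) by fastforce
  define f\<^sub>1 where "f\<^sub>1 = (\<lambda>n::nat. 2 * n + 1)"
  define f\<^sub>2 where "f\<^sub>2 = (\<lambda>n::nat. 2 * n + 2)"
  have inj: "inj_on f\<^sub>1 A" "inj_on f\<^sub>2 A" for A unfolding f\<^sub>1_def f\<^sub>2_def inj_on_def by simp_all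
  have apart: "f\<^sub>1 a \<noteq> f\<^sub>2 b" "f\<^sub>1 a \<noteq> 0" "f\<^sub>2 a \<noteq> 0" for a b
    unfolding f\<^sub>1_def f\<^sub>2_def by presburger+
  let ?G\<^sub>1 = "relabel f\<^sub>1 G" and ?G\<^sub>2 = "relabel f\<^sub>2 G"
  have disjoint: "fst ?G\<^sub>1 \<inter> fst ?G\<^sub>2 = {}" and fresh: "0 \<notin> fst ?G\<^sub>1 \<union> fst ?G\<^sub>2"
    using apart by (auto simp: image_iff)
  interpret bridged_graphs ?G\<^sub>1 ?G\<^sub>2 0 "f\<^sub>1 y" "f\<^sub>1 ` Y" "f\<^sub>2 ` Y"
    by unfold_locales (use wf_graph_relabel[OF G(1) inj(1)] wf_graph_relabel[OF G(1) inj(2)]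
        disjoint fresh y_in minimal_blocking_set_relabel[OF G(1) inj(1) G(4)]
        minimal_blocking_set_relabel[OF G(1) inj(2) G(4)] in auto)
  have connected: "connected_graph ?G\<^sub>1" "connected_graph ?G\<^sub>2"
    using connected_relabel_iff[OF G(1) inj(1)] connected_relabel_iff[OF G(1) inj(2)] G(2) by simp_all
  have "wf_graph ext.G'" by (rule ext.wf_extension)
  moreover have "connected_graph ext.G'" by (rule connected_bridge[OF connected])
  moreover have "ed_le C ext.G' (Suc d)"
    by (rule ed_le_bridge[OF connected])
       (use ed_le_relabel[OF assms(1) G(3,1)] inj in blast)+
  moreover have "minimal_blocking_set ext.G' ((f\<^sub>1 ` Y - {f\<^sub>1 y}) \<union> f\<^sub>2 ` Y)"
    by (rule minimal_blocking_set_bridge)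
  moreover have "card ((f\<^sub>1 ` Y - {f\<^sub>1 y}) \<union> f\<^sub>2 ` Y) = 2 * m - 1"
    using card_bridge_blocking_set card_image[OF inj(1)] card_image[OF inj(2)] G(5) assms(3) by simp
  ultimately show ?thesis unfolding realizable_def by blast
qed

lemma realizable_iterate:
  assumes "graph_class C" "realizable C d m" "m \<ge> 1"
  shows "realizable C (d + n) ((m - 1) * 2 ^ n + 1)"
proof (induction n)
  case 0
  thus ?case using assms(2,3) by simp
next
  case (Suc n)
  have "realizable C (Suc (d + n)) (2 * ((m - 1) * 2 ^ n + 1) - 1)"
    by (rule realizable_double[OF assms(1) Suc]) simp
  moreover have "2 * ((m - 1) * 2 ^ n + 1) - 1 = (m - 1) * 2 ^ Suc n + 1" by simp
  ultimately show ?case by (metis add_Suc_right)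
qed

lemma realizable_le_betaCd: "realizable C d m \<Longrightarrow> enat m \<le> betaCd C d"
proof -
  assume "realizable C d m"
  then obtain G Y where G: "wf_graph G" "ed_le C G d" "minimal_blocking_set G Y" "card Y = m"
    unfolding realizable_def by blast
  have "ed C G \<le> enat d" unfolding ed_def using G(2) by (intro Inf_lower) simp
  hence "enat (beta G) \<le> betaCd C d" unfolding betaCd_def using G(1) by (intro Sup_upper) blast
  moreover have "m \<le> beta G" using card_le_beta[OF G(1,3)] G(4) by simp
  ultimately show ?thesis by (meson enat_ord_simps(1) order_trans)
qed

lemma betaC_attained:
  assumes "betaC C = enat b" "b \<noteq> 0"
  obtains G where "wf_graph G" "G \<in> C" "beta G = b"
proof -
  let ?A = "{enat (beta G) | G. wf_graph G \<and> G \<in> C}"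
  have nonempty: "?A \<noteq> {}"
  proof
    assume "?A = {}"
    hence "betaC C = 0" unfolding betaC_def by (simp only: Sup_empty bot_enat_def)
    thus False using assms by (simp add: zero_enat_def)
  qed
  have finite: "finite ?A"
  proof (rule ccontr)
    assume "infinite ?A"
    hence "betaC C = \<infinity>" using nonempty unfolding betaC_def Sup_enat_def by simp
    thus False using assms(1) by simp
  qed
  have "Sup ?A = Max ?A" using nonempty finite unfolding Sup_enat_def by (simp only: if_False if_True)
  hence "Sup ?A \<in> ?A" using Max_in[OF finite nonempty] by simp
  then obtain G where "wf_graph G" "G \<in> C" "Sup ?A = enat (beta G)" by blast
  thus thesis using that assms(1) unfolding betaC_def by simp
qed

lemma realizable_betaC:
  assumes "robust C" "betaC C = enat b" "b \<noteq> 0"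
  shows "realizable C 0 b"
proof -
  obtain G where "wf_graph G" "G \<in> C" "beta G = b" using betaC_attained[OF assms(2,3)] .
  thus ?thesis using realizable_in_class[OF assms(1)] assms(3) by blast
qed

theorem mainTheorem5:
  fixes C :: "graph set" and d :: nat
  assumes "graph_class C" and "robust C" and "betaC C \<noteq> \<infinity>" and "d \<ge> 1"
  shows "(betaC C = 1 \<longrightarrow> betaCd C d \<ge> enat (2 ^ (d - 1) + 1)) \<and>
         (betaC C \<ge> 2 \<longrightarrow> betaCd C d \<ge> (betaC C - 1) * enat (2 ^ d) + 1)"
proof -
  obtain b where b: "betaC C = enat b" using assms(3) by (cases "betaC C") auto
  note base = realizable_betaC[OF assms(2) b]
  show ?thesis
  proof (intro conjI impI)
    assume "betaC C = 1"
    hence "realizable C 1 2" using realizable_pendant base b by (simp add: one_enat_def)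
    hence "realizable C (1 + (d - 1)) ((2 - 1) * 2 ^ (d - 1) + 1)"
      by (rule realizable_iterate[OF assms(1)]) simp
    thus "betaCd C d \<ge> enat (2 ^ (d - 1) + 1)" using assms(4) realizable_le_betaCd by simp
  next
    assume "betaC C \<ge> 2"
    hence "b \<ge> 2" using b by (simp add: numeral_eq_enat)
    hence "realizable C (0 + d) ((b - 1) * 2 ^ d + 1)" using realizable_iterate[OF assms(1) base] by simp
    moreover have "(betaC C - 1) * enat (2 ^ d) + 1 = enat ((b - 1) * 2 ^ d + 1)"
      using b by (simp add: one_enat_def)
    ultimately show "betaCd C d \<ge> (betaC C - 1) * enat (2 ^ d) + 1" using realizable_le_betaCd by simp
  qed
qed

end
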